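(* Let $\delta>0$ be a sufficiently small constant, $1\le d\le n/2$, $k$ an integer with $n/\sqrt d\le k\le\sqrt\delta\, n$, $p=d/n$, $\mu=\binom k2 p$, and $G_n\sim G(n,p)$. Then w.h.p. there are no two $k$-vertex sets $U,U'\subseteq[n]$ with $|U\cap U'|\le\delta k$ such that (i) every $V\subseteq U$ with $|V|\le\delta k$ induces at most $2\delta\mu$ edges in $G_n$, (ii) the number of edges of $G_n[U]$ lies in $\big((1-\delta)\mu,(1+\delta)\mu\big)$, and $G_n[U]\cong G_n[U']$.
   Context: $G(n,p)$ is the random graph on $[n]$ with each edge present independently with probability $p$; w.h.p. means with probability tending to 1 as $n\to\infty$. $G[U]$ denotes the subgraph induced by $U$. *)

theory Defs
  imports "HOL-Probability.Probability"
begin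

text \<open>Vertex set [n] is rendered as {..<n}; a graph is a set of 2-element vertex sets.\<close>

definition all_edges :: "nat \<Rightarrow> nat set set" where
  "all_edges n = {e. \<exists>i j. i < j \<and> j < n \<and> e = {i, j}}"

definition gnp :: "nat \<Rightarrow> real \<Rightarrow> nat set set pmf" where
  "gnp n p = map_pmf (\<lambda>f. {e \<in> all_edges n. f e})
                     (Pi_pmf (all_edges n) False (\<lambda>_. bernoulli_pmf p))"

definition induced_edges :: "nat set set \<Rightarrow> nat set \<Rightarrow> nat" where
  "induced_edges E V = card {e \<in> E. e \<subseteq> V}"

definition induced_iso :: "nat set set \<Rightarrow> nat set \<Rightarrow> nat set \<Rightarrow> bool" where
  "induced_iso E U U' \<longleftrightarrow> (\<exists>f. bij_betw f U U' \<and>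
      (\<forall>x\<in>U. \<forall>y\<in>U. {x, y} \<in> E \<longleftrightarrow> {f x, f y} \<in> E))"

definition bad_pair :: "nat \<Rightarrow> nat \<Rightarrow> real \<Rightarrow> real \<Rightarrow> nat set set \<Rightarrow> bool" where
  "bad_pair n k p \<delta> E \<longleftrightarrow>
     (let \<mu> = real (k choose 2) * p in
      \<exists>U U'. U \<subseteq> {..<n} \<and> U' \<subseteq> {..<n} \<and> card U = k \<and> card U' = k \<and>
        real (card (U \<inter> U')) \<le> \<delta> * real k \<and>
        (\<forall>V \<subseteq> U. real (card V) \<le> \<delta> * real k \<longrightarrow> real (induced_edges E V) \<le> 2 * \<delta> * \<mu>) \<and>
        (1 - \<delta>) * \<mu> < real (induced_edges E U) \<and> real (induced_edges E U) < (1 + \<delta>) * \<mu> \<and>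
        induced_iso E U U')"

end

theory Submission
  imports Defs "HOL-Real_Asymp.Real_Asymp"
begin

text \<open>Fix \<open>U\<close> and an injection \<open>f\<close> of \<open>U\<close> with \<open>|U \<inter> f(U)| \<le> \<delta>k\<close>, and suppose \<open>f\<close> is an
  isomorphism \<open>G[U] \<cong> G[f(U)]\<close>. The set \<open>V = U \<inter> f\<^sup>-\<^sup>1(U)\<close> has at most \<open>\<delta>k\<close> vertices, so by (i)
  and (ii) at least \<open>(1 - 3\<delta>)\<mu>\<close> edges of \<open>G[U]\<close> are not inside \<open>V\<close>; \<open>f\<close> maps them to edges
  of \<open>G\<close> that are not inside \<open>U\<close>. These are determined by \<open>G[U]\<close> and independent of it, so given
  \<open>G[U]\<close> the event has probability at most \<open>p\<^bsup>(1-3\<delta>)\<mu>\<^esup>\<close>. A union bound over the at most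
  \<open>n\<^bsup>2k\<^esup>\<close> pairs \<open>(U, f)\<close> leaves \<open>exp(2k ln n - (\<mu>/2) ln(1/p))\<close>, and this is at most \<open>1/n\<close>:
  \<open>k \<ge> n/\<surd>d\<close> gives \<open>kp \<ge> \<surd>d\<close>, \<open>k \<le> \<surd>\<delta> n\<close> makes \<open>\<surd>d\<close> large, and then
  \<open>\<mu> ln(1/p) \<ge> (k/4) \<surd>d ln(n/d) \<ge> 8k ln n\<close>.\<close>

abbreviation iid_bernoulli :: "'a set \<Rightarrow> real \<Rightarrow> ('a \<Rightarrow> bool) pmf" where
  "iid_bernoulli N p \<equiv> Pi_pmf N False (\<lambda>_. bernoulli_pmf p)"

text \<open>\<open>Pi N (pattern P S T)\<close> is the event that the coins on \<open>P\<close> spell out the indicator of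
  \<open>S\<close> and those on \<open>T - P\<close> all show \<open>True\<close>.\<close>
definition pattern :: "'a set \<Rightarrow> 'a set \<Rightarrow> 'a set \<Rightarrow> 'a \<Rightarrow> bool set" where
  "pattern P S T e = (if e \<in> P then {e \<in> S} else if e \<in> T then {True} else UNIV)"

lemma measure_Pi_pattern:
  assumes "finite N" "T \<subseteq> N" "T \<inter> P = {}" "0 \<le> p" "p \<le> 1"
  shows "measure_pmf.prob (iid_bernoulli N p) (Pi N (pattern P S T)) =
         measure_pmf.prob (iid_bernoulli N p) (Pi N (pattern P S {})) * p ^ card T"
proof -
  have coin: "measure_pmf.prob (bernoulli_pmf p) (pattern P S T e) =
      measure_pmf.prob (bernoulli_pmf p) (pattern P S {} e) * (if e \<in> T then p else 1)" for e
    using assms by (auto simp: pattern_def measure_pmf_single)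
  have "(\<Prod>e\<in>N. if e \<in> T then p else 1) = p ^ card T"
    using assms by (simp add: prod.If_cases Int_absorb1 Int_commute)
  then show ?thesis
    using assms by (simp add: measure_Pi_pmf_Pi coin prod.distrib)
qed

lemma sum_measure_Pi_pattern_le_1:
  assumes "finite P" "P \<subseteq> N"
  shows "(\<Sum>S\<in>Pow P. measure_pmf.prob M (Pi N (pattern P S {}))) \<le> 1"
proof -
  have "disjoint_family_on (\<lambda>S. Pi N (pattern P S {})) (Pow P)"
    unfolding disjoint_family_on_def
  proof (intro ballI impI)
    fix S S' assume "S \<in> Pow P" "S' \<in> Pow P" "S \<noteq> S'"
    then obtain e where e: "e \<in> P" "(e \<in> S) \<noteq> (e \<in> S')" by blast
    show "Pi N (pattern P S {}) \<inter> Pi N (pattern P S' {}) = {}"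
    proof (rule equals0I)
      fix h assume "h \<in> Pi N (pattern P S {}) \<inter> Pi N (pattern P S' {})"
      then have "h e \<in> pattern P S {} e" "h e \<in> pattern P S' {} e" using e(1) assms(2) by auto
      with e show False by (simp add: pattern_def)
    qed
  qed
  then have "(\<Sum>S\<in>Pow P. measure_pmf.prob M (Pi N (pattern P S {}))) =
      measure_pmf.prob M (\<Union>S\<in>Pow P. Pi N (pattern P S {}))"
    using assms by (intro measure_pmf.finite_measure_finite_Union[symmetric]) auto
  then show ?thesis by simp
qed

lemma measure_Union_patterns_le:
  assumes "finite N" "P \<subseteq> N" "\<S> \<subseteq> Pow P"
    and T: "\<And>S. S \<in> \<S> \<Longrightarrow> T S \<subseteq> N \<and> T S \<inter> P = {} \<and> m \<le> real (card (T S))"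
    and p: "0 < p" "p \<le> 1"
  shows "measure_pmf.prob (iid_bernoulli N p) (\<Union>S\<in>\<S>. Pi N (pattern P S (T S))) \<le> p powr m"
proof -
  let ?M = "iid_bernoulli N p"
  have "finite P" using assms(1,2) by (rule finite_subset[rotated])
  then have "finite \<S>" using assms(3) by (meson finite_Pow_iff finite_subset)
  have "measure_pmf.prob ?M (\<Union>S\<in>\<S>. Pi N (pattern P S (T S)))
        \<le> (\<Sum>S\<in>\<S>. measure_pmf.prob ?M (Pi N (pattern P S (T S))))"
    using \<open>finite \<S>\<close> by (intro measure_pmf.finite_measure_subadditive_finite) auto
  also have "\<dots> = (\<Sum>S\<in>\<S>. measure_pmf.prob ?M (Pi N (pattern P S {})) * p ^ card (T S))"
    using assms by (intro sum.cong refl measure_Pi_pattern) auto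
  also have "\<dots> \<le> (\<Sum>S\<in>\<S>. measure_pmf.prob ?M (Pi N (pattern P S {})) * p powr m)"
  proof (intro sum_mono mult_left_mono)
    fix S assume "S \<in> \<S>"
    then have "p powr real (card (T S)) \<le> p powr m" using T p by (intro powr_mono') auto
    then show "p ^ card (T S) \<le> p powr m" using p by (simp add: powr_realpow)
  qed auto
  also have "\<dots> \<le> (\<Sum>S\<in>Pow P. measure_pmf.prob ?M (Pi N (pattern P S {}))) * p powr m"
    unfolding sum_distrib_right using assms(3) \<open>finite P\<close> by (intro sum_mono2) auto
  also have "\<dots> \<le> p powr m"
    using sum_measure_Pi_pattern_le_1[OF \<open>finite P\<close> assms(2)] by (intro mult_left_le_one_le sum_nonneg) auto
  finally show ?thesis .
qed

lemma finite_all_edges: "finite (all_edges n)"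
  by (rule finite_subset[of _ "Pow {..<n}"]) (auto simp: all_edges_def)

lemma doubleton_in_all_edges_iff: "{a, b} \<in> all_edges n \<longleftrightarrow> a \<noteq> b \<and> a < n \<and> b < n"
proof
  assume "a \<noteq> b \<and> a < n \<and> b < n"
  then show "{a, b} \<in> all_edges n"
    unfolding all_edges_def by (intro CollectI exI[of _ "min a b"] exI[of _ "max a b"]) auto
qed (auto simp: all_edges_def doubleton_eq_iff)

lemma image_edges_subset_all_edges:
  assumes "S \<subseteq> all_edges n" "\<Union>S \<subseteq> U" "inj_on f U" "f ` U \<subseteq> {..<n}"
  shows "(`) f ` S \<subseteq> all_edges n"
proof
  fix e' assume "e' \<in> (`) f ` S"
  then obtain e where "e \<in> S" "e' = f ` e" by blast
  moreover obtain i j where "i < j" "e = {i, j}" using assms(1) \<open>e \<in> S\<close> by (auto simp: all_edges_def)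
  moreover have "e \<subseteq> U" using assms(2) \<open>e \<in> S\<close> by auto
  ultimately show "e' \<in> all_edges n"
    using assms(2-4) by (auto simp: doubleton_in_all_edges_iff inj_on_def)
qed

definition bad_witness :: "nat \<Rightarrow> real \<Rightarrow> real \<Rightarrow> nat set \<Rightarrow> (nat \<Rightarrow> nat) \<Rightarrow> nat set set \<Rightarrow> bool" where
  "bad_witness k \<mu> \<delta> U f E \<longleftrightarrow>
     (\<forall>V \<subseteq> U. real (card V) \<le> \<delta> * real k \<longrightarrow> real (induced_edges E V) \<le> 2 * \<delta> * \<mu>) \<and>
     (1 - \<delta>) * \<mu> < real (induced_edges E U) \<and>
     (\<forall>x\<in>U. \<forall>y\<in>U. {x, y} \<in> E \<longleftrightarrow> {f x, f y} \<in> E)"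

lemma card_edges_le_leaving_images:
  assumes "finite E" "inj_on f U"
  shows "card {e \<in> E. e \<subseteq> U} \<le>
         card ((`) f ` {e \<in> E. e \<subseteq> U \<and> \<not> f ` e \<subseteq> U}) + induced_edges E {x \<in> U. f x \<in> U}"
proof -
  define S where "S = {e \<in> E. e \<subseteq> U}"
  define Q where "Q = {e \<in> S. f ` e \<subseteq> U}"
  define R where "R = {e \<in> E. e \<subseteq> U \<and> \<not> f ` e \<subseteq> U}"
  have "finite Q" "finite R" "Q \<inter> R = {}" using assms(1) by (auto simp: Q_def R_def S_def)
  moreover have "S = Q \<union> R" by (auto simp: Q_def R_def S_def)
  ultimately have "card S = card Q + card R" by (simp add: card_Un_disjoint)
  moreover have "R \<subseteq> Pow U" by (auto simp: R_def S_def)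
  then have "card ((`) f ` R) = card R"
    by (intro card_image inj_on_subset[OF inj_on_image_Pow[OF assms(2)]])
  moreover have "card Q \<le> induced_edges E {x \<in> U. f x \<in> U}"
    unfolding induced_edges_def Q_def S_def using assms(1) by (intro card_mono) auto
  ultimately show ?thesis by (simp add: R_def S_def)
qed

lemma bad_witness_forces_edges:
  assumes E: "E \<subseteq> all_edges n" and bw: "bad_witness k \<mu> \<delta> U f E"
    and U: "finite U" "inj_on f U" and overlap: "real (card (U \<inter> f ` U)) \<le> \<delta> * real k"
  defines "T \<equiv> (`) f ` {e \<in> E. e \<subseteq> U \<and> \<not> f ` e \<subseteq> U}"
  shows "T \<subseteq> E" and "(1 - 3 * \<delta>) * \<mu> \<le> real (card T)"
proof -
  have sparse: "\<And>V. V \<subseteq> U \<Longrightarrow> real (card V) \<le> \<delta> * real k \<Longrightarrow>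
      real (induced_edges E V) \<le> 2 * \<delta> * \<mu>"
    and dense: "(1 - \<delta>) * \<mu> < real (card {e \<in> E. e \<subseteq> U})"
    and iso: "\<forall>x\<in>U. \<forall>y\<in>U. {x, y} \<in> E \<longleftrightarrow> {f x, f y} \<in> E"
    using bw by (simp_all add: bad_witness_def induced_edges_def)
  show "T \<subseteq> E"
  proof
    fix e' assume "e' \<in> T"
    then obtain e where e: "e \<in> E" "e \<subseteq> U" "e' = f ` e" unfolding T_def by auto
    then obtain i j where "e = {i, j}" using E by (auto simp: all_edges_def)
    with e iso show "e' \<in> E" by auto
  qed
  define V where "V = {x \<in> U. f x \<in> U}"
  have "inj_on f V" using U(2) by (rule inj_on_subset) (auto simp: V_def)
  then have "card V = card (f ` V)" by (simp add: card_image)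
  also have "\<dots> \<le> card (U \<inter> f ` U)"
    using U(1) by (intro card_mono) (auto simp: V_def)
  finally have "real (card V) \<le> \<delta> * real k"
    using overlap by (meson of_nat_le_iff order_trans)
  then have "real (induced_edges E V) \<le> 2 * \<delta> * \<mu>"
    by (intro sparse) (auto simp: V_def)
  moreover have "card {e \<in> E. e \<subseteq> U} \<le> card T + induced_edges E V"
    using card_edges_le_leaving_images[OF finite_subset[OF E finite_all_edges] U(2)]
    unfolding T_def V_def .
  then have "real (card {e \<in> E. e \<subseteq> U}) \<le> real (card T) + real (induced_edges E V)"
    by (metis of_nat_add of_nat_mono)
  ultimately have "(1 - \<delta>) * \<mu> < real (card T) + 2 * \<delta> * \<mu>"
    using dense by linarith
  then show "(1 - 3 * \<delta>) * \<mu> \<le> real (card T)"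
    by (simp add: left_diff_distrib)
qed

lemma prob_bad_witness_le:
  assumes U: "U \<subseteq> {..<n}" "inj_on f U" "f ` U \<subseteq> {..<n}"
    and overlap: "real (card (U \<inter> f ` U)) \<le> \<delta> * real k"
    and p: "0 < p" "p \<le> 1"
  shows "measure_pmf.prob (gnp n p) {E. bad_witness k \<mu> \<delta> U f E} \<le> p powr ((1 - 3 * \<delta>) * \<mu>)"
proof -
  define N where "N = all_edges n"
  define P where "P = {e \<in> N. e \<subseteq> U}"
  define T where "T S = (`) f ` {e \<in> S. \<not> f ` e \<subseteq> U}" for S
  define \<S> where "\<S> = {S \<in> Pow P. (1 - 3 * \<delta>) * \<mu> \<le> real (card (T S))}"
  have "finite U" using U(1) by (rule finite_subset) simp
  have cover: "(\<lambda>h. {e \<in> N. h e}) -` {E. bad_witness k \<mu> \<delta> U f E} \<subseteq> (\<Union>S\<in>\<S>. Pi N (pattern P S (T S)))"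
  proof
    fix h assume "h \<in> (\<lambda>h. {e \<in> N. h e}) -` {E. bad_witness k \<mu> \<delta> U f E}"
    then have bw: "bad_witness k \<mu> \<delta> U f {e \<in> N. h e}" by simp
    define S where "S = {e \<in> N. h e \<and> e \<subseteq> U}"
    have "T S = (`) f ` {e \<in> {e \<in> N. h e}. e \<subseteq> U \<and> \<not> f ` e \<subseteq> U}"
      by (simp add: T_def S_def)
    moreover have "{e \<in> N. h e} \<subseteq> all_edges n" by (auto simp: N_def)
    ultimately have TS: "T S \<subseteq> {e \<in> N. h e}" "(1 - 3 * \<delta>) * \<mu> \<le> real (card (T S))"
      using bad_witness_forces_edges[OF _ bw \<open>finite U\<close> U(2) overlap] by simp_all
    moreover have "S \<in> Pow P" by (auto simp: S_def P_def)
    ultimately have "S \<in> \<S>" by (simp add: \<S>_def)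
    moreover have "h \<in> Pi N (pattern P S (T S))"
      using TS(1) by (auto simp: pattern_def P_def S_def)
    ultimately show "h \<in> (\<Union>S\<in>\<S>. Pi N (pattern P S (T S)))" by blast
  qed
  have "measure_pmf.prob (gnp n p) {E. bad_witness k \<mu> \<delta> U f E}
      = measure_pmf.prob (iid_bernoulli N p) ((\<lambda>h. {e \<in> N. h e}) -` {E. bad_witness k \<mu> \<delta> U f E})"
    by (simp add: gnp_def N_def)
  also have "\<dots> \<le> measure_pmf.prob (iid_bernoulli N p) (\<Union>S\<in>\<S>. Pi N (pattern P S (T S)))"
    using cover by (rule measure_pmf.finite_measure_mono) simp
  also have "\<dots> \<le> p powr ((1 - 3 * \<delta>) * \<mu>)"
  proof (rule measure_Union_patterns_le)
    fix S assume "S \<in> \<S>"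
    then have "S \<subseteq> P" "(1 - 3 * \<delta>) * \<mu> \<le> real (card (T S))" by (auto simp: \<S>_def)
    moreover have "T S \<subseteq> N"
    proof -
      have "T S \<subseteq> (`) f ` S" by (auto simp: T_def)
      also have "\<dots> \<subseteq> N"
        using \<open>S \<subseteq> P\<close> U(2,3) unfolding N_def
        by (intro image_edges_subset_all_edges) (auto simp: P_def N_def)
      finally show ?thesis .
    qed
    ultimately show "T S \<subseteq> N \<and> T S \<inter> P = {} \<and> (1 - 3 * \<delta>) * \<mu> \<le> real (card (T S))"
      by (auto simp: T_def P_def)
  qed (use p in \<open>auto simp: N_def P_def \<S>_def finite_all_edges\<close>)
  finally show ?thesis .
qed

lemma bad_pair_imp_bad_witness:
  assumes "bad_pair n k p \<delta> E"
  obtains U f where "U \<subseteq> {..<n}" "card U = k" "f \<in> U \<rightarrow>\<^sub>E {..<n}" "inj_on f U"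
    "real (card (U \<inter> f ` U)) \<le> \<delta> * real k" "bad_witness k (real (k choose 2) * p) \<delta> U f E"
proof -
  obtain U U' g where U: "U \<subseteq> {..<n}" "U' \<subseteq> {..<n}" "card U = k"
    and overlap: "real (card (U \<inter> U')) \<le> \<delta> * real k" and g: "bij_betw g U U'"
    and bw: "bad_witness k (real (k choose 2) * p) \<delta> U g E"
    using assms unfolding bad_pair_def Let_def induced_iso_def bad_witness_def by blast
  have "bad_witness k (real (k choose 2) * p) \<delta> U (restrict g U) E"
    using bw by (simp add: bad_witness_def)
  moreover have "restrict g U \<in> U \<rightarrow>\<^sub>E {..<n}"
    using g U(2) by (auto simp: bij_betw_def)
  ultimately show ?thesis
    using U overlap g by (intro that[of U "restrict g U"]) (simp_all add: bij_betw_def)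
qed

lemma finite_subsets_funcset:
  fixes n k :: nat
  shows "finite (SIGMA U:{U. U \<subseteq> {..<n} \<and> card U = k}. U \<rightarrow>\<^sub>E {..<n})"
proof (rule finite_SigmaI)
  show "finite {U. U \<subseteq> {..<n} \<and> card U = k}" by (rule finite_subset[of _ "Pow {..<n}"]) auto
  fix U assume "U \<in> {U. U \<subseteq> {..<n} \<and> card U = k}"
  then have "finite U" using finite_subset by blast
  then show "finite (U \<rightarrow>\<^sub>E {..<n})" by (rule finite_PiE) simp
qed

lemma card_subsets_funcset_le:
  fixes n k :: nat
  shows "card (SIGMA U:{U. U \<subseteq> {..<n} \<and> card U = k}. U \<rightarrow>\<^sub>E {..<n}) \<le> n ^ (2 * k)"
proof -
  define \<K> where "\<K> = {U. U \<subseteq> {..<n} \<and> card U = k}"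
  have "finite \<K>" by (rule finite_subset[of _ "Pow {..<n}"]) (auto simp: \<K>_def)
  moreover have fin_U: "finite U" if "U \<in> \<K>" for U
    using that finite_subset by (auto simp: \<K>_def)
  ultimately have "card (SIGMA U:\<K>. U \<rightarrow>\<^sub>E {..<n}) = (\<Sum>U\<in>\<K>. card (U \<rightarrow>\<^sub>E {..<n}))"
    by (simp add: finite_PiE)
  also have "\<dots> = (\<Sum>U\<in>\<K>. n ^ k)"
    using fin_U by (intro sum.cong refl) (simp add: card_funcsetE \<K>_def)
  also have "\<dots> = (n choose k) * n ^ k"
    using n_subsets[of "{..<n}" k] by (simp add: \<K>_def)
  also have "\<dots> \<le> n ^ k * n ^ k"
    by (cases "k \<le> n") (simp_all add: binomial_le_pow binomial_eq_0 not_le)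
  finally show ?thesis by (simp add: \<K>_def power_add mult_2)
qed

lemma prob_bad_pair_le:
  assumes p: "0 < p" "p \<le> 1"
  shows "measure_pmf.prob (gnp n p) {E. bad_pair n k p \<delta> E}
           \<le> real (n ^ (2 * k)) * p powr ((1 - 3 * \<delta>) * (real (k choose 2) * p))"
proof -
  let ?\<mu> = "real (k choose 2) * p"
  define \<K> where "\<K> = {U. U \<subseteq> {..<n} \<and> card U = k}"
  define W where "W = {(U, f) \<in> (SIGMA U:\<K>. U \<rightarrow>\<^sub>E {..<n}).
                          inj_on f U \<and> real (card (U \<inter> f ` U)) \<le> \<delta> * real k}"
  have fin_Sigma: "finite (SIGMA U:\<K>. U \<rightarrow>\<^sub>E {..<n})"
    unfolding \<K>_def by (rule finite_subsets_funcset)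
  have W_sub: "W \<subseteq> (SIGMA U:\<K>. U \<rightarrow>\<^sub>E {..<n})" by (auto simp: W_def)
  have "card W \<le> n ^ (2 * k)"
    by (rule order_trans[OF card_mono[OF fin_Sigma W_sub]]) (simp add: \<K>_def card_subsets_funcset_le)
  have "{E. bad_pair n k p \<delta> E} \<subseteq> (\<Union>(U, f)\<in>W. {E. bad_witness k ?\<mu> \<delta> U f E})"
  proof
    fix E assume "E \<in> {E. bad_pair n k p \<delta> E}"
    then obtain U f where "U \<subseteq> {..<n}" "card U = k" "f \<in> U \<rightarrow>\<^sub>E {..<n}" "inj_on f U"
      "real (card (U \<inter> f ` U)) \<le> \<delta> * real k" "bad_witness k ?\<mu> \<delta> U f E"
      using bad_pair_imp_bad_witness by blast
    then show "E \<in> (\<Union>(U, f)\<in>W. {E. bad_witness k ?\<mu> \<delta> U f E})"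
      unfolding W_def \<K>_def by blast
  qed
  then have "measure_pmf.prob (gnp n p) {E. bad_pair n k p \<delta> E}
      \<le> measure_pmf.prob (gnp n p) (\<Union>(U, f)\<in>W. {E. bad_witness k ?\<mu> \<delta> U f E})"
    by (rule measure_pmf.finite_measure_mono) simp
  also have "\<dots> \<le> (\<Sum>(U, f)\<in>W. measure_pmf.prob (gnp n p) {E. bad_witness k ?\<mu> \<delta> U f E})"
    using measure_pmf.finite_measure_subadditive_finite[OF finite_subset[OF W_sub fin_Sigma],
        of "\<lambda>(U, f). {E. bad_witness k ?\<mu> \<delta> U f E}"]
    by (simp add: prod.case_distrib)
  also have "\<dots> \<le> (\<Sum>(U, f)\<in>W. p powr ((1 - 3 * \<delta>) * ?\<mu>))"
  proof (rule sum_mono, clarify)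
    fix U f assume "(U, f) \<in> W"
    then have "U \<subseteq> {..<n}" "inj_on f U" "f ` U \<subseteq> {..<n}" "real (card (U \<inter> f ` U)) \<le> \<delta> * real k"
      by (auto simp: W_def \<K>_def)
    with p show "measure_pmf.prob (gnp n p) {E. bad_witness k ?\<mu> \<delta> U f E} \<le> p powr ((1 - 3 * \<delta>) * ?\<mu>)"
      by (intro prob_bad_witness_le)
  qed
  also have "\<dots> \<le> real (n ^ (2 * k)) * p powr ((1 - 3 * \<delta>) * ?\<mu>)"
    using \<open>card W \<le> n ^ (2 * k)\<close> by (simp add: mult_right_mono)
  finally show ?thesis .
qed

lemma eventually_ln_le_root4: "\<forall>\<^sub>F n in sequentially. 32 * ln (real n) \<le> ln 2 * real n powr (1/4)"
  by real_asymp

lemma ln_le_sqrt_mul_ln_ratio: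
  fixes x d :: real
  assumes x: "1 \<le> x" "32 * ln x \<le> ln 2 * x powr (1/4)"
    and d: "1 \<le> d" "d \<le> x / 2" "64 \<le> sqrt d"
  shows "32 * ln x \<le> sqrt d * ln (x / d)"
proof (cases "d \<le> sqrt x")
  case True
  have "ln d \<le> ln (sqrt x)" using True d(1) x(1) by (subst ln_le_cancel_iff) auto
  also have "\<dots> = ln x / 2" using x(1) by (simp add: ln_sqrt)
  finally have "ln x / 2 \<le> ln (x / d)" using d(1) x(1) by (simp add: ln_div)
  moreover have "0 \<le> ln x" using x(1) by simp
  ultimately have "64 * (ln x / 2) \<le> sqrt d * ln (x / d)"
    using d(1,3) by (intro mult_mono) auto
  then show ?thesis by simp
next
  case False
  have "x powr (1/4) = sqrt (sqrt x)"
    using x(1) by (simp add: sqrt_def root_powr_inverse powr_powr)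
  also have "\<dots> \<le> sqrt d" using False by simp
  finally have "x powr (1/4) \<le> sqrt d" .
  moreover have "ln 2 \<le> ln (x / d)" using d(1,2) by (simp add: field_simps)
  ultimately have "ln 2 * x powr (1/4) \<le> sqrt d * ln (x / d)"
    using d(1) by (subst mult.commute, intro mult_mono) auto
  then show ?thesis using x(2) by linarith
qed

lemma sparse_regime_bounds:
  fixes n k :: nat and d \<delta> :: real
  assumes \<delta>: "0 < \<delta>" "\<delta> \<le> 1/16384" and d: "1 \<le> d" "d \<le> real n / 2"
    and k: "real n / sqrt d \<le> real k" "real k \<le> sqrt \<delta> * real n"
  shows "2 \<le> n" "2 \<le> k" "128 \<le> sqrt d" "sqrt d \<le> real k * (d / real n)"
proof -
  show "2 \<le> n" using d by linarith
  then have n: "0 < real n" by simp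
  have "sqrt d > 0" using d(1) by simp
  have "(2 * sqrt d)\<^sup>2 = 2 * 2 * d" using d(1) by (simp add: power_mult_distrib)
  also have "\<dots> \<le> 2 * real n" using d(2) by simp
  also have "\<dots> \<le> real n * real n" using \<open>2 \<le> n\<close> by (intro mult_right_mono) auto
  finally have "(2 * sqrt d)\<^sup>2 \<le> (real n)\<^sup>2" by (simp add: power2_eq_square)
  then have "2 * sqrt d \<le> real n" by (rule power2_le_imp_le) simp
  moreover have n_le: "real n \<le> real k * sqrt d" using k(1) \<open>sqrt d > 0\<close> by (simp add: divide_le_eq)
  ultimately have "2 * sqrt d \<le> real k * sqrt d" by linarith
  then have "2 \<le> real k" using \<open>sqrt d > 0\<close> by (rule mult_right_le_imp_le)
  then show "2 \<le> k" by simp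
  have "sqrt \<delta> \<le> sqrt (1/16384)" using \<delta>(2) by simp
  then have "sqrt \<delta> \<le> 1/128" by (simp add: real_sqrt_divide)
  have "real n \<le> real k * sqrt d" by (fact n_le)
  also have "\<dots> \<le> sqrt \<delta> * real n * sqrt d" using k(2) \<open>sqrt d > 0\<close> by (intro mult_right_mono) auto
  also have "\<dots> \<le> 1/128 * real n * sqrt d"
    using \<open>sqrt \<delta> \<le> 1/128\<close> n \<open>sqrt d > 0\<close> by (intro mult_right_mono) auto
  finally show "128 \<le> sqrt d" using n by simp
  have "sqrt d = real n / sqrt d * (d / real n)"
    using n d(1) by (simp add: real_div_sqrt)
  also have "\<dots> \<le> real k * (d / real n)"
    using k(1) n d(1) by (intro mult_right_mono) auto
  finally show "sqrt d \<le> real k * (d / real n)" .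
qed

lemma real_choose_two: "2 * real (k choose 2) = real k * (real k - 1)"
proof (cases k)
  case (Suc m)
  have "even (k * (k - 1))" by auto
  then have "2 * (k choose 2) = k * (k - 1)" by (simp add: choose_two)
  then have "2 * real (k choose 2) = real k * real (k - 1)" by (metis of_nat_mult of_nat_numeral)
  then show ?thesis using Suc by simp
qed simp

lemma card_times_powr_le_inverse:
  fixes n k :: nat and p \<delta> :: real
  assumes n: "2 \<le> n" and k: "2 \<le> k" and \<delta>: "\<delta> \<le> 1/6" and p: "0 < p" "p \<le> 1"
    and exponent: "32 * ln (real n) \<le> real k * p * ln (1 / p)"
  shows "real (n ^ (2 * k)) * p powr ((1 - 3 * \<delta>) * (real (k choose 2) * p)) \<le> 1 / real n"
proof -
  define \<mu> where "\<mu> = real (k choose 2) * p"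
  define L where "L = ln (1 / p)"
  have L: "0 \<le> L" using p by (simp add: L_def)
  have "4 * real k * ln (real n) \<le> real k / 8 * (real k * p * L)"
    using mult_left_mono[OF exponent, of "real k / 8"] by (simp add: L_def)
  also have "\<dots> = real k * (real k / 2) * p * L / 4" by (simp add: field_simps)
  also have "\<dots> \<le> real k * (real k - 1) * p * L / 4"
    using k p L by (intro divide_right_mono mult_right_mono mult_left_mono) auto
  also have "\<dots> = \<mu> * L / 2"
    using real_choose_two[of k] by (simp add: \<mu>_def)
  finally have decay: "4 * real k * ln (real n) \<le> \<mu> * L / 2" .
  have "\<mu> / 2 \<le> (1 - 3 * \<delta>) * \<mu>"
    using mult_right_mono[of "1/2" "1 - 3 * \<delta>" \<mu>] \<delta> p by (simp add: \<mu>_def)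
  then have "p powr ((1 - 3 * \<delta>) * \<mu>) \<le> p powr (\<mu> / 2)"
    using p by (intro powr_mono') auto
  also have "\<dots> = exp (- (\<mu> * L / 2))" using p by (simp add: powr_def L_def ln_div)
  finally have "real (n ^ (2 * k)) * p powr ((1 - 3 * \<delta>) * \<mu>) \<le>
      exp (real (2 * k) * ln (real n)) * exp (- (\<mu> * L / 2))"
    using n by (intro mult_mono) (auto simp: powr_realpow[symmetric] powr_def)
  also have "\<dots> \<le> exp (- ln (real n))"
  proof -
    have "ln (real n) \<le> real k * ln (real n)"
      using mult_right_mono[of 1 "real k" "ln (real n)"] k n by simp
    moreover have "0 \<le> ln (real n)" using n by simp
    ultimately show ?thesis using decay by (simp add: exp_add[symmetric])
  qed
  also have "\<dots> = 1 / real n" using n by (simp add: exp_minus inverse_eq_divide)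
  finally show ?thesis by (simp add: \<mu>_def)
qed

lemma prob_bad_pair_le_inverse:
  fixes n k :: nat and d \<delta> :: real
  assumes \<delta>: "0 < \<delta>" "\<delta> \<le> 1/16384" and d: "1 \<le> d" "d \<le> real n / 2"
    and k: "real n / sqrt d \<le> real k" "real k \<le> sqrt \<delta> * real n"
    and n_large: "32 * ln (real n) \<le> ln 2 * real n powr (1/4)"
  shows "measure_pmf.prob (gnp n (d / real n)) {E. bad_pair n k (d / real n) \<delta> E} \<le> 1 / real n"
proof -
  note regime = sparse_regime_bounds[OF \<delta> d k]
  define p where "p = d / real n"
  have p: "0 < p" "p \<le> 1" using d regime(1) by (auto simp: p_def field_simps)
  have "0 \<le> ln (real n / d)" using d by (simp add: field_simps)
  have "32 * ln (real n) \<le> sqrt d * ln (real n / d)"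
    using regime(1,3) n_large d by (intro ln_le_sqrt_mul_ln_ratio) auto
  also have "\<dots> \<le> real k * p * ln (real n / d)"
    using regime(4) \<open>0 \<le> ln (real n / d)\<close> by (intro mult_right_mono) (simp_all add: p_def)
  also have "\<dots> = real k * p * ln (1 / p)" by (simp add: p_def)
  finally have "real (n ^ (2 * k)) * p powr ((1 - 3 * \<delta>) * (real (k choose 2) * p)) \<le> 1 / real n"
    using regime(1,2) \<delta> p by (intro card_times_powr_le_inverse) auto
  with prob_bad_pair_le[OF p, of n k \<delta>] show ?thesis by (simp add: p_def)
qed

theorem mainTheorem13:
  shows "\<exists>\<delta>\<^sub>0 > 0. \<forall>\<delta>. 0 < \<delta> \<and> \<delta> < \<delta>\<^sub>0 \<longrightarrow>
    (\<forall>(d :: nat \<Rightarrow> real) (k :: nat \<Rightarrow> nat).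
      (\<forall>\<^sub>F n in sequentially. 1 \<le> d n \<and> d n \<le> real n / 2 \<and>
          real n / sqrt (d n) \<le> real (k n) \<and> real (k n) \<le> sqrt \<delta> * real n)
      \<longrightarrow> ((\<lambda>n. measure_pmf.prob (gnp n (d n / real n))
                 {E. \<not> bad_pair n (k n) (d n / real n) \<delta> E}) \<longlongrightarrow> 1) sequentially)"
proof (intro exI[of _ "1/16384"] conjI allI impI)
  fix \<delta> :: real and d :: "nat \<Rightarrow> real" and k :: "nat \<Rightarrow> nat"
  assume \<delta>: "0 < \<delta> \<and> \<delta> < 1/16384"
  let ?bad = "\<lambda>n. measure_pmf.prob (gnp n (d n / real n)) {E. bad_pair n (k n) (d n / real n) \<delta> E}"
  assume "\<forall>\<^sub>F n in sequentially. 1 \<le> d n \<and> d n \<le> real n / 2 \<and>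
          real n / sqrt (d n) \<le> real (k n) \<and> real (k n) \<le> sqrt \<delta> * real n"
  then have "\<forall>\<^sub>F n in sequentially. ?bad n \<le> 1 / real n"
    using eventually_ln_le_root4
    by eventually_elim (use \<delta> in \<open>auto intro: prob_bad_pair_le_inverse\<close>)
  then have "?bad \<longlonglongrightarrow> 0"
    by (intro tendsto_sandwich[OF _ _ tendsto_const lim_inverse_n']) auto
  then have "(\<lambda>n. 1 - ?bad n) \<longlonglongrightarrow> 1"
    using tendsto_diff[OF tendsto_const, of ?bad 0 sequentially 1] by simp
  moreover have "measure_pmf.prob (gnp n (d n / real n)) {E. \<not> bad_pair n (k n) (d n / real n) \<delta> E}
      = 1 - ?bad n" for n
    using measure_pmf.prob_compl[of "{E. bad_pair n (k n) (d n / real n) \<delta> E}"]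
    by (simp add: Compl_eq_Diff_UNIV[symmetric] Collect_neg_eq)
  ultimately show "((\<lambda>n. measure_pmf.prob (gnp n (d n / real n))
                 {E. \<not> bad_pair n (k n) (d n / real n) \<delta> E}) \<longlongrightarrow> 1) sequentially"
    by simp
qed simp

end
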